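(* Let $p\ge1$ be an integer, $x_1,\dots,x_p\in\mathbb{R}_{\ge0}$, $\epsilon\in(0,1]$, and $\delta>0$ with $\delta\le\frac{\min_{i\in[p]}x_i}{4\epsilon^{-1}\log(2p\epsilon^{-1})}$. Let $x'_1,\dots,x'_p\in\mathbb{R}_{\ge0}$ satisfy $x_i\le x'_i\le x_i+\delta$ for all $i\in[p]$. Then $\mathrm{TV}\big(\mathrm{softargmin}^\epsilon_{i\in[p]}x_i,\ \mathrm{softargmin}^\epsilon_{i\in[p]}x'_i\big)\le\frac{10\epsilon^{-1}\log(2p\epsilon^{-1})\delta}{\min_{i\in[p]}x_i}$.
   Context: Softmin: if $\min_i x_i=0$, $\mathrm{softargmin}^\epsilon_{i\in[p]}x_i$ is an arbitrary index $i$ with $x_i=0$. Otherwise, sample $\bm c$ uniformly from $\big[\frac{2\epsilon^{-1}\log(2p\epsilon^{-1})}{\min_i x_i},\frac{4\epsilon^{-1}\log(2p\epsilon^{-1})}{\min_i x_i}\big]$, then sample $\bm i^*\in[p]$ with $\Pr[\bm i^*=i\mid\bm c]=\exp(-\bm c x_i)/\sum_{i'\in[p]}\exp(-\bm c x_{i'})$, and set $\mathrm{softargmin}^\epsilon_{i\in[p]}x_i=\bm i^*$ (the same procedure on $x'_1,\dots,x'_p$ defines $\mathrm{softargmin}^\epsilon_{i\in[p]}x'_i$). $\log$ is natural. $\mathrm{TV}(\bm X,\bm X')=\inf_{\mathcal D}\Pr_{(X,X')\sim\mathcal D}[X\neq X']$ over couplings $\mathcal D$. *)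

theory Defs
  imports "HOL-Probability.Probability"
begin

(* Indices [p] are represented as {0..<p}; points as x :: nat => real (only x 0 .. x (p-1) matter). *)

definition xmin :: "nat \<Rightarrow> (nat \<Rightarrow> real) \<Rightarrow> real" where
  "xmin p x = Min (x ` {..<p})"

definition softL :: "real \<Rightarrow> nat \<Rightarrow> real" where
  "softL eps p = (1 / eps) * ln (2 * real p * (1 / eps))"

(* probability that softargmin returns index i, in the case min x > 0:
   c uniform on [lo, hi], lo = 2 L / min x, hi = 4 L / min x, then
   Pr[i | c] = exp(-c x_i) / sum_j exp(-c x_j). *)
definition softw :: "real \<Rightarrow> nat \<Rightarrow> (nat \<Rightarrow> real) \<Rightarrow> nat \<Rightarrow> real" where
  "softw eps p x i =
     (let lo = 2 * softL eps p / xmin p x; hi = 4 * softL eps p / xmin p x in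
      if i < p then
        (1 / (hi - lo)) *
          (LBINT c=lo..hi. exp (- c * x i) / (\<Sum>j<p. exp (- c * x j)))
      else 0)"

(* The output distribution of softargmin^eps_{i in [p]} x_i.  If min x = 0 the
   output is some (fixed, arbitrary) index i with x_i = 0. *)
definition softargmin :: "real \<Rightarrow> nat \<Rightarrow> (nat \<Rightarrow> real) \<Rightarrow> nat pmf" where
  "softargmin eps p x =
     (if xmin p x = 0 then return_pmf (SOME i. i < p \<and> x i = 0)
      else embed_pmf (softw eps p x))"

definition TV :: "'a pmf \<Rightarrow> 'a pmf \<Rightarrow> real" where
  "TV P Q = Inf {measure_pmf.prob D {z. fst z \<noteq> snd z} | D.
                   map_pmf fst D = P \<and> map_pmf snd D = Q}"

end

theory Submission
  imports Defs "HOL-Analysis.Harmonic_Numbers"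
begin

text \<open>Write L = softL eps p, m = min x and m' = min x', so m \<le> m' \<le> m + \<delta>. Couple the two
  outputs by using the same temperature c as often as possible: the windows [2L/m, 4L/m] and
  [2L/m', 4L/m'] differ only in pieces of relative length O(\<delta>/m), and for a common c the two
  softmax distributions are within c\<delta> \<le> 4L\<delta>/m in total variation, because raising every
  coordinate by at most \<delta> multiplies each weight by a factor in [e^{-c\<delta>}, 1]. Total variation
  itself is bounded by half the l1 distance through the maximal coupling.\<close>

lemma pmf_embed_pmf_finite:
  fixes f :: "'a \<Rightarrow> real"
  assumes "finite A" "\<And>x. 0 \<le> f x" "\<And>x. x \<notin> A \<Longrightarrow> f x = 0" "sum f A = 1"
  shows "pmf (embed_pmf f) = f"
proof -
  have "(\<integral>\<^sup>+x. ennreal (f x) \<partial>count_space UNIV) = (\<Sum>x\<in>A. ennreal (f x))"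
    using assms by (intro nn_integral_count_space') auto
  also have "\<dots> = 1" using assms by (simp add: sum_ennreal)
  finally show ?thesis using assms(2) by (intro ext pmf_embed_pmf) auto
qed

lemma measure_pmf_finite_support:
  assumes "finite A" "\<And>x. x \<notin> A \<Longrightarrow> pmf D x = 0"
  shows "measure_pmf.prob D S = (\<Sum>z\<in>S \<inter> A. pmf D z)"
proof -
  have "set_pmf D \<subseteq> A" using assms by (auto simp: set_pmf_eq)
  then have "measure_pmf.prob D S = measure_pmf.prob D (S \<inter> A)"
    by (metis inf.absorb_iff2 inf_assoc measure_Int_set_pmf)
  also have "\<dots> = (\<Sum>z\<in>S \<inter> A. pmf D z)" using assms by (intro measure_measure_pmf_finite) auto
  finally show ?thesis .
qed

lemma sum_pmf_finite_support:
  assumes "finite A" "\<And>x. x \<notin> A \<Longrightarrow> pmf D x = 0"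
  shows "(\<Sum>z\<in>A. pmf D z) = 1"
  using measure_pmf_finite_support[OF assms, of UNIV] by simp

lemma pmf_map_fst_finite_support:
  assumes "finite A" "\<And>z. z \<notin> A \<times> A \<Longrightarrow> pmf D z = 0"
  shows "pmf (map_pmf fst D) i = (\<Sum>j\<in>A. pmf D (i, j))"
proof -
  have "pmf (map_pmf fst D) i = (\<Sum>z\<in>fst -` {i} \<inter> A \<times> A. pmf D z)"
    unfolding pmf_map using assms by (intro measure_pmf_finite_support) auto
  also have "\<dots> = (\<Sum>z\<in>Pair i ` A. pmf D z)"
    using assms by (intro sum.mono_neutral_left) auto
  also have "\<dots> = (\<Sum>j\<in>A. pmf D (i, j))" by (subst sum.reindex) (auto simp: inj_on_def)
  finally show ?thesis .
qed

lemma pmf_map_snd_finite_support: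
  assumes "finite A" "\<And>z. z \<notin> A \<times> A \<Longrightarrow> pmf D z = 0"
  shows "pmf (map_pmf snd D) j = (\<Sum>i\<in>A. pmf D (i, j))"
proof -
  have swap: "pmf (map_pmf prod.swap D) z = pmf D (prod.swap z)" for z
    using pmf_map_inj'[of prod.swap D "prod.swap z"] by simp
  have "map_pmf snd D = map_pmf fst (map_pmf prod.swap D)" by (simp add: pmf.map_comp o_def)
  also have "pmf \<dots> j = (\<Sum>i\<in>A. pmf (map_pmf prod.swap D) (j, i))"
  proof (rule pmf_map_fst_finite_support[OF assms(1)])
    show "pmf (map_pmf prod.swap D) z = 0" if "z \<notin> A \<times> A" for z
      using assms(2)[of "prod.swap z"] that by (cases z) (auto simp: swap)
  qed
  finally show ?thesis by (simp add: swap)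
qed

lemma TV_le_one_minus_trace:
  fixes h :: "'a \<times> 'a \<Rightarrow> real"
  assumes A: "finite A"
    and P: "\<And>i. i \<notin> A \<Longrightarrow> pmf P i = 0" and Q: "\<And>j. j \<notin> A \<Longrightarrow> pmf Q j = 0"
    and h_nonneg: "\<And>z. 0 \<le> h z" and h_support: "\<And>z. z \<notin> A \<times> A \<Longrightarrow> h z = 0"
    and rows: "\<And>i. i \<in> A \<Longrightarrow> (\<Sum>j\<in>A. h (i, j)) = pmf P i"
    and cols: "\<And>j. j \<in> A \<Longrightarrow> (\<Sum>i\<in>A. h (i, j)) = pmf Q j"
  shows "TV P Q \<le> 1 - (\<Sum>i\<in>A. h (i, i))"
proof -
  define D where "D = embed_pmf h"
  have "(\<Sum>z\<in>A \<times> A. h z) = (\<Sum>i\<in>A. \<Sum>j\<in>A. h (i, j))" by (simp add: sum.cartesian_product)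
  also have "\<dots> = (\<Sum>i\<in>A. pmf P i)" by (simp add: rows)
  also have "\<dots> = 1" using A P by (rule sum_pmf_finite_support)
  finally have pmf_D: "pmf D = h"
    unfolding D_def using A h_nonneg h_support by (intro pmf_embed_pmf_finite[of "A \<times> A"]) auto
  have "map_pmf fst D = P"
  proof (rule pmf_eqI)
    show "pmf (map_pmf fst D) i = pmf P i" for i
      using A h_support
      by (cases "i \<in> A") (simp_all add: pmf_map_fst_finite_support pmf_D rows P)
  qed
  moreover have "map_pmf snd D = Q"
  proof (rule pmf_eqI)
    show "pmf (map_pmf snd D) j = pmf Q j" for j
      using A h_support
      by (cases "j \<in> A") (simp_all add: pmf_map_snd_finite_support pmf_D cols Q)
  qed
  ultimately have "TV P Q \<le> measure_pmf.prob D {z. fst z \<noteq> snd z}"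
    unfolding TV_def by (intro cInf_lower) (auto intro!: bdd_belowI[of _ 0])
  also have "\<dots> = 1 - measure_pmf.prob D {z. fst z = snd z}"
    using measure_pmf.prob_compl[of "{z. fst z = snd z}" D] by (simp add: Compl_eq_Diff_UNIV[symmetric] Collect_neg_eq)
  also have "measure_pmf.prob D {z. fst z = snd z} = (\<Sum>z\<in>(\<lambda>i. (i, i)) ` A. h z)"
    using A h_support unfolding pmf_D[symmetric]
    by (subst measure_pmf_finite_support[of "A \<times> A"]) (auto simp: pmf_D intro!: sum.cong)
  also have "\<dots> = (\<Sum>i\<in>A. h (i, i))" by (simp add: sum.reindex inj_on_def)
  finally show ?thesis .
qed

text \<open>The coupling keeps the common mass min P Q on the diagonal and pairs the excesses of
  P and Q independently. If their total s is 0 the excesses vanish, so dividing by s = 0 is harmless.\<close>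
lemma TV_le_half_sum_abs_diff:
  assumes A: "finite A"
    and P: "\<And>i. i \<notin> A \<Longrightarrow> pmf P i = 0" and Q: "\<And>j. j \<notin> A \<Longrightarrow> pmf Q j = 0"
  shows "TV P Q \<le> (\<Sum>i\<in>A. \<bar>pmf P i - pmf Q i\<bar>) / 2"
proof -
  define mn where "mn i = min (pmf P i) (pmf Q i)" for i
  define s where "s = (\<Sum>i\<in>A. pmf P i - mn i)"
  have sum_P: "(\<Sum>i\<in>A. pmf P i) = 1" and sum_Q: "(\<Sum>i\<in>A. pmf Q i) = 1"
    using A P Q by (simp_all add: sum_pmf_finite_support)
  have s_Q: "s = (\<Sum>i\<in>A. pmf Q i - mn i)"
    unfolding s_def using sum_P sum_Q by (simp add: sum_subtractf)
  have excess_nonneg: "0 \<le> pmf P i - mn i" "0 \<le> pmf Q i - mn i" for i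
    by (auto simp: mn_def)
  have s_nonneg: "0 \<le> s"
    unfolding s_def by (rule sum_nonneg) (rule excess_nonneg)
  have excess_P: "(pmf P i - mn i) * s / s = pmf P i - mn i" if "i \<in> A" for i
    using sum_nonneg_eq_0_iff[OF A, of "\<lambda>i. pmf P i - mn i"] excess_nonneg that
    by (cases "s = 0") (auto simp: s_def)
  have excess_Q: "s * (pmf Q j - mn j) / s = pmf Q j - mn j" if "j \<in> A" for j
    using sum_nonneg_eq_0_iff[OF A, of "\<lambda>i. pmf Q i - mn i"] excess_nonneg that
    by (cases "s = 0") (auto simp: s_Q)
  define h where "h z = (if fst z = snd z then mn (fst z) else 0)
      + (pmf P (fst z) - mn (fst z)) * (pmf Q (snd z) - mn (snd z)) / s" for z
  have "TV P Q \<le> 1 - (\<Sum>i\<in>A. h (i, i))"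
  proof (rule TV_le_one_minus_trace[OF A P Q])
    show "0 \<le> h z" for z
      unfolding h_def using excess_nonneg s_nonneg
      by (intro add_nonneg_nonneg divide_nonneg_nonneg mult_nonneg_nonneg) (auto simp: mn_def)
    show "h z = 0" if "z \<notin> A \<times> A" for z
      using that P Q by (cases z) (auto simp: h_def mn_def)
    show "(\<Sum>j\<in>A. h (i, j)) = pmf P i" if "i \<in> A" for i
      using that A excess_P[OF that]
      by (simp add: h_def sum.distrib s_Q sum_distrib_left[symmetric] sum_divide_distrib[symmetric] mn_def)
    show "(\<Sum>i\<in>A. h (i, j)) = pmf Q j" if "j \<in> A" for j
      using that A excess_Q[OF that]
      by (simp add: h_def sum.distrib s_def sum_distrib_right[symmetric] sum_divide_distrib[symmetric] mn_def)
  qed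
  also have "\<dots> \<le> 1 - (\<Sum>i\<in>A. mn i)"
    using excess_nonneg s_nonneg by (intro diff_left_mono sum_mono) (simp add: h_def)
  also have "\<dots> = (\<Sum>i\<in>A. \<bar>pmf P i - pmf Q i\<bar>) / 2"
  proof -
    have "(\<Sum>i\<in>A. \<bar>pmf P i - pmf Q i\<bar>) = (\<Sum>i\<in>A. pmf P i + pmf Q i - 2 * mn i)"
      by (intro sum.cong) (auto simp: mn_def)
    also have "\<dots> = 2 - 2 * (\<Sum>i\<in>A. mn i)"
      by (simp add: sum.distrib sum_subtractf sum_distrib_left sum_P sum_Q)
    finally show ?thesis by simp
  qed
  finally show ?thesis .
qed

definition softmax :: "nat \<Rightarrow> (nat \<Rightarrow> real) \<Rightarrow> real \<Rightarrow> nat \<Rightarrow> real" where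
  "softmax p y c i = exp (- c * y i) / (\<Sum>j<p. exp (- c * y j))"

lemma softmax_nonneg: "0 \<le> softmax p y c i"
  by (simp add: softmax_def sum_nonneg)

lemma continuous_on_softmax: "continuous_on S (\<lambda>c. softmax p y c i)"
proof (cases "p = 0")
  case False
  then have "(\<Sum>j<p. exp (- c * y j)) \<noteq> 0" for c
    by (intro sum_pos[THEN less_imp_neq, symmetric]) auto
  then show ?thesis unfolding softmax_def by (intro continuous_intros) auto
qed (simp add: softmax_def)

lemma sum_softmax:
  assumes "p \<ge> 1"
  shows "(\<Sum>i<p. softmax p y c i) = 1"
proof -
  have "(\<Sum>j<p. exp (- c * y j)) > 0" using assms by (intro sum_pos) (auto simp: lessThan_empty_iff)
  then show ?thesis by (simp add: softmax_def flip: sum_divide_distrib)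
qed

text \<open>Raising each coordinate by at most \<delta> lowers each weight by a factor of at least
  e^{-c\<delta>} \<ge> 1 - c\<delta> and also lowers the normaliser; so the mass lost by any coordinate is
  at most c\<delta> times its weight, and the total variation is at most c\<delta>.\<close>
lemma sum_abs_softmax_diff_le:
  assumes p: "p \<ge> 1" and c: "c \<ge> 0"
    and shift: "\<And>i. i < p \<Longrightarrow> x i \<le> x' i \<and> x' i \<le> x i + \<delta>"
  shows "(\<Sum>i<p. \<bar>softmax p x c i - softmax p x' c i\<bar>) \<le> 2 * c * \<delta>"
proof -
  define a where "a i = exp (- c * x i)" for i
  define b where "b i = exp (- c * x' i)" for i
  define Z where "Z = (\<Sum>j<p. a j)"
  define Z' where "Z' = (\<Sum>j<p. b j)"
  have Z_pos: "Z > 0" "Z' > 0" using p by (auto simp: Z_def Z'_def a_def b_def lessThan_empty_iff intro!: sum_pos)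
  have b_le_a: "b i \<le> a i" if "i < p" for i
    unfolding a_def b_def using shift[OF that] c by (auto intro: mult_left_mono)
  have a_minus_b: "a i - b i \<le> c * \<delta> * a i" if "i < p" for i
  proof -
    have "a i * (1 - c * \<delta>) \<le> a i * exp (- (c * \<delta>))"
      using exp_ge_add_one_self[of "- (c * \<delta>)"] by (intro mult_left_mono) (auto simp: a_def)
    also have "\<dots> = exp (- c * (x i + \<delta>))" by (simp add: a_def algebra_simps flip: exp_add)
    also have "\<dots> \<le> b i" using shift[OF that] c by (auto simp: b_def intro: mult_left_mono)
    finally show ?thesis by (simp add: algebra_simps)
  qed
  have "Z' \<le> Z" unfolding Z_def Z'_def using b_le_a by (intro sum_mono) auto
  define d where "d i = a i / Z - b i / Z'" for i
  have sum_d: "(\<Sum>i<p. d i) = 0"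
    using Z_pos by (simp add: d_def sum_subtractf Z_def Z'_def flip: sum_divide_distrib)
  have d_pos_part: "max (d i) 0 \<le> c * \<delta> * a i / Z" if "i < p" for i
  proof -
    have "b i / Z \<le> b i / Z'" using \<open>Z' \<le> Z\<close> Z_pos by (intro divide_left_mono) (auto simp: b_def)
    then have "d i \<le> (a i - b i) / Z" by (simp add: d_def diff_divide_distrib)
    moreover have "0 \<le> (a i - b i) / Z" using b_le_a[OF that] Z_pos by simp
    ultimately show ?thesis using divide_right_mono[OF a_minus_b[OF that], of Z] Z_pos by linarith
  qed
  have "(\<Sum>i<p. \<bar>d i\<bar>) = 2 * (\<Sum>i<p. max (d i) 0)"
  proof -
    have "(\<Sum>i<p. \<bar>d i\<bar>) = (\<Sum>i<p. 2 * max (d i) 0 - d i)" by (intro sum.cong) auto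
    then show ?thesis using sum_d by (simp add: sum_subtractf sum_distrib_left)
  qed
  also have "\<dots> \<le> 2 * (\<Sum>i<p. c * \<delta> * a i / Z)"
    using d_pos_part by (intro mult_left_mono sum_mono) auto
  also have "(\<Sum>i<p. c * \<delta> * a i / Z) = c * \<delta>"
    using Z_pos by (simp add: Z_def flip: sum_divide_distrib sum_distrib_left)
  finally show ?thesis by (simp add: d_def a_def b_def Z_def Z'_def softmax_def)
qed

definition interval_average :: "real \<Rightarrow> real \<Rightarrow> (real \<Rightarrow> real) \<Rightarrow> real" where
  "interval_average a b f = integral {a..b} f / (b - a)"

lemma sum_integral_probability_vector:
  fixes F :: "real \<Rightarrow> nat \<Rightarrow> real"
  assumes cont: "\<And>i. continuous_on UNIV (\<lambda>c. F c i)" and sum1: "\<And>c. (\<Sum>i<p. F c i) = 1"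
    and "a \<le> b"
  shows "(\<Sum>i<p. integral {a..b} (\<lambda>c. F c i)) = b - a"
proof -
  have "(\<Sum>i<p. integral {a..b} (\<lambda>c. F c i)) = integral {a..b} (\<lambda>c. \<Sum>i<p. F c i)"
    by (rule integral_sum[symmetric])
      (auto intro!: integrable_continuous_interval continuous_on_subset[OF cont])
  also have "\<dots> = b - a" using sum1 \<open>a \<le> b\<close> by simp
  finally show ?thesis .
qed

text \<open>Split both windows at lo and hi': the common part [lo, hi'] is weighted differently by
  the two averages, and each window has a private end piece.\<close>
lemma sum_abs_interval_average_shift_le:
  fixes F :: "real \<Rightarrow> nat \<Rightarrow> real"
  assumes cont: "\<And>i. continuous_on UNIV (\<lambda>c. F c i)"
    and nonneg: "\<And>c i. 0 \<le> F c i" and sum1: "\<And>c. (\<Sum>i<p. F c i) = 1"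
    and order: "lo' \<le> lo" "lo \<le> hi'" "hi' \<le> hi" "lo < hi" "lo' < hi'"
  shows "(\<Sum>i<p. \<bar>interval_average lo hi (\<lambda>c. F c i) - interval_average lo' hi' (\<lambda>c. F c i)\<bar>)
     \<le> \<bar>1 / (hi - lo) - 1 / (hi' - lo')\<bar> * (hi' - lo) + (hi - hi') / (hi - lo) + (lo - lo') / (hi' - lo')"
proof -
  define I where "I a b i = integral {a..b} (\<lambda>c. F c i)" for a b i
  define w where "w = hi - lo"
  define w' where "w' = hi' - lo'"
  have integrable: "(\<lambda>c. F c i) integrable_on {a..b}" for a b i
    by (auto intro!: integrable_continuous_interval continuous_on_subset[OF cont])
  have I_nonneg: "0 \<le> I a b i" for a b i
    unfolding I_def by (rule Henstock_Kurzweil_Integration.integral_nonneg[OF integrable]) (simp add: nonneg)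
  have split: "I lo hi i = I lo hi' i + I hi' hi i" "I lo' hi' i = I lo' lo i + I lo hi' i" for i
    unfolding I_def using order by (simp_all add: Henstock_Kurzweil_Integration.integral_combine integrable)
  have w_pos: "w > 0" "w' > 0" using order by (auto simp: w_def w'_def)
  have pointwise: "\<bar>I lo hi i / w - I lo' hi' i / w'\<bar>
      \<le> \<bar>1/w - 1/w'\<bar> * I lo hi' i + I hi' hi i / w + I lo' lo i / w'"
    for i
  proof -
    have "I lo hi i / w - I lo' hi' i / w' = (1/w - 1/w') * I lo hi' i + I hi' hi i / w - I lo' lo i / w'"
      unfolding split by (simp add: diff_divide_distrib add_divide_distrib algebra_simps)
    moreover have "\<bar>(1/w - 1/w') * I lo hi' i\<bar> = \<bar>1/w - 1/w'\<bar> * I lo hi' i"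
      using I_nonneg by (simp add: abs_mult)
    moreover have "0 \<le> I hi' hi i / w" "0 \<le> I lo' lo i / w'" using I_nonneg w_pos by auto
    ultimately show ?thesis by linarith
  qed
  have "(\<Sum>i<p. \<bar>I lo hi i / w - I lo' hi' i / w'\<bar>)
      \<le> \<bar>1/w - 1/w'\<bar> * (\<Sum>i<p. I lo hi' i) + (\<Sum>i<p. I hi' hi i) / w + (\<Sum>i<p. I lo' lo i) / w'"
    using sum_mono[OF pointwise] by (simp add: sum.distrib sum_distrib_left sum_divide_distrib)
  also have "\<dots> = \<bar>1/w - 1/w'\<bar> * (hi' - lo) + (hi - hi') / w + (lo - lo') / w'"
    unfolding I_def using order by (simp add: sum_integral_probability_vector[OF cont sum1])
  finally show ?thesis by (simp add: interval_average_def I_def w_def w'_def)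
qed

lemma sum_abs_integral_diff_le:
  fixes F G :: "real \<Rightarrow> nat \<Rightarrow> real"
  assumes contF: "\<And>i. continuous_on UNIV (\<lambda>c. F c i)" and contG: "\<And>i. continuous_on UNIV (\<lambda>c. G c i)"
    and "a \<le> b" and bound: "\<And>c. c \<in> {a..b} \<Longrightarrow> (\<Sum>i<p. \<bar>F c i - G c i\<bar>) \<le> K"
  shows "(\<Sum>i<p. \<bar>integral {a..b} (\<lambda>c. F c i) - integral {a..b} (\<lambda>c. G c i)\<bar>) \<le> K * (b - a)"
proof -
  have integrable: "(\<lambda>c. F c i - G c i) integrable_on {a..b}"
    "(\<lambda>c. \<bar>F c i - G c i\<bar>) integrable_on {a..b}" for i
    by (auto intro!: integrable_continuous_interval continuous_intros
        continuous_on_subset[OF contF] continuous_on_subset[OF contG])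
  have "(\<Sum>i<p. \<bar>integral {a..b} (\<lambda>c. F c i) - integral {a..b} (\<lambda>c. G c i)\<bar>)
      = (\<Sum>i<p. \<bar>integral {a..b} (\<lambda>c. F c i - G c i)\<bar>)"
    by (intro sum.cong refl arg_cong[where f = abs] integral_diff[symmetric])
      (auto intro!: integrable_continuous_interval continuous_on_subset[OF contF] continuous_on_subset[OF contG])
  also have "\<dots> \<le> (\<Sum>i<p. integral {a..b} (\<lambda>c. \<bar>F c i - G c i\<bar>))"
    by (intro sum_mono integral_norm_bound_integral[OF integrable, unfolded real_norm_def]) simp
  also have "\<dots> = integral {a..b} (\<lambda>c. \<Sum>i<p. \<bar>F c i - G c i\<bar>)"
    by (rule integral_sum[symmetric]) (auto intro: integrable)
  also have "\<dots> \<le> integral {a..b} (\<lambda>c. K)"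
    by (rule integral_le) (auto intro!: integrable_sum integrable bound)
  also have "\<dots> = K * (b - a)" using \<open>a \<le> b\<close> by simp
  finally show ?thesis .
qed

lemma sum_abs_interval_average_diff_le:
  fixes F G :: "real \<Rightarrow> nat \<Rightarrow> real"
  assumes contF: "\<And>i. continuous_on UNIV (\<lambda>c. F c i)" and contG: "\<And>i. continuous_on UNIV (\<lambda>c. G c i)"
    and nonneg: "\<And>c i. 0 \<le> F c i" and sum1: "\<And>c. (\<Sum>i<p. F c i) = 1"
    and order: "lo' \<le> lo" "lo \<le> hi'" "hi' \<le> hi" "lo < hi" "lo' < hi'"
    and bound: "\<And>c. c \<in> {lo'..hi'} \<Longrightarrow> (\<Sum>i<p. \<bar>F c i - G c i\<bar>) \<le> K"
  shows "(\<Sum>i<p. \<bar>interval_average lo hi (\<lambda>c. F c i) - interval_average lo' hi' (\<lambda>c. G c i)\<bar>)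
     \<le> \<bar>1 / (hi - lo) - 1 / (hi' - lo')\<bar> * (hi' - lo) + (hi - hi') / (hi - lo) + (lo - lo') / (hi' - lo') + K"
proof -
  define avg :: "real \<Rightarrow> real \<Rightarrow> (real \<Rightarrow> nat \<Rightarrow> real) \<Rightarrow> nat \<Rightarrow> real"
    where "avg a b H i = interval_average a b (\<lambda>c. H c i)" for a b H i
  have "(\<Sum>i<p. \<bar>avg lo' hi' F i - avg lo' hi' G i\<bar>)
      = (\<Sum>i<p. \<bar>integral {lo'..hi'} (\<lambda>c. F c i) - integral {lo'..hi'} (\<lambda>c. G c i)\<bar>) / (hi' - lo')"
    unfolding sum_divide_distrib using order
    by (intro sum.cong) (simp_all add: avg_def interval_average_def abs_divide flip: diff_divide_distrib)
  also have "\<dots> \<le> K * (hi' - lo') / (hi' - lo')"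
    using order by (intro divide_right_mono sum_abs_integral_diff_le[OF contF contG _ bound]) auto
  also have "\<dots> = K" using order by simp
  finally have "(\<Sum>i<p. \<bar>avg lo' hi' F i - avg lo' hi' G i\<bar>) \<le> K" .
  moreover have "(\<Sum>i<p. \<bar>avg lo hi F i - avg lo' hi' G i\<bar>)
      \<le> (\<Sum>i<p. \<bar>avg lo hi F i - avg lo' hi' F i\<bar>) + (\<Sum>i<p. \<bar>avg lo' hi' F i - avg lo' hi' G i\<bar>)"
    by (subst sum.distrib[symmetric]) (intro sum_mono, linarith)
  ultimately show ?thesis
    using sum_abs_interval_average_shift_le[OF contF nonneg sum1 order] by (simp add: avg_def)
qed

lemma xmin_shift_bounds:
  assumes p: "p \<ge> 1" and shift: "\<And>i. i < p \<Longrightarrow> x i \<le> x' i \<and> x' i \<le> x i + \<delta>"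
  shows "xmin p x \<le> xmin p x'" "xmin p x' \<le> xmin p x + \<delta>"
proof -
  have ne: "finite (y ` {..<p})" "y ` {..<p} \<noteq> {}" for y :: "nat \<Rightarrow> real"
    using p by (auto simp: lessThan_empty_iff)
  obtain j where j: "j < p" "x j = xmin p x"
    using Min_in[OF ne[of x]] unfolding xmin_def by auto
  obtain k where k: "k < p" "x' k = xmin p x'"
    using Min_in[OF ne[of x']] unfolding xmin_def by auto
  have "xmin p y \<le> y i" if "i < p" for y i
    unfolding xmin_def using ne that by auto
  then show "xmin p x \<le> xmin p x'" "xmin p x' \<le> xmin p x + \<delta>"
    using j k shift by (metis order.trans add_right_mono)+
qed

lemma softL_ge_two_thirds:
  assumes "p \<ge> 1" "0 < eps" "eps \<le> 1"
  shows "2 / 3 \<le> softL eps p"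
proof -
  have "2 \<le> 2 * real p * (1 / eps)" using assms by (simp add: field_simps)
  then have "2 / 3 \<le> ln (2 * real p * (1 / eps))"
    using ln2_ge_two_thirds by (smt (verit) ln_le_cancel_iff)
  moreover have "1 \<le> 1 / eps" using assms by simp
  ultimately have "1 * (2 / 3) \<le> (1 / eps) * ln (2 * real p * (1 / eps))"
    using assms by (intro mult_mono) auto
  then show ?thesis by (simp add: softL_def)
qed

lemma pmf_softargmin:
  assumes p: "p \<ge> 1" and m: "xmin p y > 0" and L: "softL eps p > 0"
  shows "pmf (softargmin eps p y) i = (if i < p then
    interval_average (2 * softL eps p / xmin p y) (4 * softL eps p / xmin p y) (\<lambda>c. softmax p y c i) else 0)"
proof -
  define lo where "lo = 2 * softL eps p / xmin p y"
  define hi where "hi = 4 * softL eps p / xmin p y"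
  have "lo < hi" using m L by (simp add: lo_def hi_def divide_strict_right_mono)
  have w: "softw eps p y j = (if j < p then interval_average lo hi (\<lambda>c. softmax p y c j) else 0)" for j
  proof -
    have "(LBINT c=lo..hi. exp (- c * y j) / (\<Sum>j<p. exp (- c * y j))) = integral {lo..hi} (\<lambda>c. softmax p y c j)"
      unfolding softmax_def[symmetric] using \<open>lo < hi\<close>
      by (intro interval_integral_eq_integral borel_integrable_atLeastAtMost' continuous_on_softmax) auto
    then show ?thesis
      unfolding softw_def Let_def lo_def[symmetric] hi_def[symmetric] interval_average_def by simp
  qed
  have "pmf (embed_pmf (softw eps p y)) = softw eps p y"
  proof (rule pmf_embed_pmf_finite[of "{..<p}"])
    show "0 \<le> softw eps p y j" for j
      unfolding w interval_average_def using \<open>lo < hi\<close>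
      by (auto intro!: divide_nonneg_pos Henstock_Kurzweil_Integration.integral_nonneg
          integrable_continuous_interval continuous_on_softmax softmax_nonneg)
    show "sum (softw eps p y) {..<p} = 1"
      unfolding w interval_average_def using \<open>lo < hi\<close>
      by (simp add: sum_integral_probability_vector[OF continuous_on_softmax sum_softmax[OF p]]
          flip: sum_divide_distrib)
  qed (auto simp: w)
  moreover have "softargmin eps p y = embed_pmf (softw eps p y)" using m by (simp add: softargmin_def)
  ultimately show ?thesis by (simp add: w lo_def hi_def)
qed

lemma window_shift_term_le:
  fixes L m m' \<delta> :: real
  assumes "L > 0" "0 < m" "m \<le> m'" "m' \<le> m + \<delta>" "m' \<le> 2 * m"
  shows "\<bar>1 / (4*L/m - 2*L/m) - 1 / (4*L/m' - 2*L/m')\<bar> * (4*L/m' - 2*L/m)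
      + (4*L/m - 4*L/m') / (4*L/m - 2*L/m) + (2*L/m - 2*L/m') / (4*L/m' - 2*L/m') \<le> 4 * \<delta> / m"
proof -
  have "m' > 0" using assms by linarith
  have first: "\<bar>1 / (4*L/m - 2*L/m) - 1 / (4*L/m' - 2*L/m')\<bar> * (4*L/m' - 2*L/m) \<le> (m' - m) / m"
  proof -
    have "\<bar>1 / (4*L/m - 2*L/m) - 1 / (4*L/m' - 2*L/m')\<bar> = (m' - m) / (2*L)"
      using assms \<open>m' > 0\<close> by (simp add: field_simps)
    moreover have "(m' - m) / (2*L) * (4*L/m' - 2*L/m) \<le> (m' - m) / (2*L) * (2*L/m)"
      using divide_left_mono[of m m' "4*L"] assms by (intro mult_left_mono) auto
    ultimately show ?thesis using assms by simp
  qed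
  have "(4*L/m - 4*L/m') / (4*L/m - 2*L/m) = 2 * (m' - m) / m'"
    "(2*L/m - 2*L/m') / (4*L/m' - 2*L/m') = (m' - m) / m"
    using assms \<open>m' > 0\<close> by (simp_all add: field_simps)
  moreover have "2 * (m' - m) / m' \<le> 2 * (m' - m) / m"
    using assms by (intro divide_left_mono) auto
  moreover have "4 * (m' - m) / m \<le> 4 * \<delta> / m"
    using assms by (intro divide_right_mono) auto
  moreover have "(m' - m) / m + 2 * (m' - m) / m + (m' - m) / m = 4 * (m' - m) / m"
    by (simp add: field_simps)
  ultimately show ?thesis using first by linarith
qed

lemma sum_abs_softmax_window_average_diff_le:
  assumes p: "p \<ge> 1" and L: "L > 0" and m: "0 < m" "m \<le> m'" "m' \<le> m + \<delta>" "m' \<le> 2 * m"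
    and shift: "\<And>i. i < p \<Longrightarrow> x i \<le> x' i \<and> x' i \<le> x i + \<delta>"
  shows "(\<Sum>i<p. \<bar>interval_average (2 * L / m) (4 * L / m) (\<lambda>c. softmax p x c i)
      - interval_average (2 * L / m') (4 * L / m') (\<lambda>c. softmax p x' c i)\<bar>) \<le> 2 * ((2 + 4 * L) * \<delta> / m)"
proof -
  define lo where "lo = 2 * L / m"
  define hi where "hi = 4 * L / m"
  define lo' where "lo' = 2 * L / m'"
  define hi' where "hi' = 4 * L / m'"
  have order: "lo' \<le> lo" "lo \<le> hi'" "hi' \<le> hi" "lo < hi" "lo' < hi'"
    using L m divide_left_mono[of m' "2 * m" "4 * L"]
    by (auto simp: lo_def hi_def lo'_def hi'_def intro!: divide_left_mono divide_strict_right_mono)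
  have softmax_close: "(\<Sum>i<p. \<bar>softmax p x c i - softmax p x' c i\<bar>) \<le> 2 * hi * \<delta>"
    if "c \<in> {lo'..hi'}" for c
  proof -
    have "0 \<le> c" using that L m by (auto simp: lo'_def intro: order.trans[rotated])
    then have "(\<Sum>i<p. \<bar>softmax p x c i - softmax p x' c i\<bar>) \<le> 2 * c * \<delta>"
      by (rule sum_abs_softmax_diff_le[OF p _ shift])
    also have "\<dots> \<le> 2 * hi * \<delta>"
      using that order m by (intro mult_right_mono) auto
    finally show ?thesis .
  qed
  have "\<bar>1 / (hi - lo) - 1 / (hi' - lo')\<bar> * (hi' - lo) + (hi - hi') / (hi - lo) + (lo - lo') / (hi' - lo')
      \<le> 4 * \<delta> / m"
    unfolding lo_def hi_def lo'_def hi'_def using L m by (intro window_shift_term_le) auto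
  moreover have "(\<Sum>i<p. \<bar>interval_average lo hi (\<lambda>c. softmax p x c i)
      - interval_average lo' hi' (\<lambda>c. softmax p x' c i)\<bar>)
      \<le> \<bar>1 / (hi - lo) - 1 / (hi' - lo')\<bar> * (hi' - lo) + (hi - hi') / (hi - lo)
        + (lo - lo') / (hi' - lo') + 2 * hi * \<delta>"
    by (rule sum_abs_interval_average_diff_le[OF continuous_on_softmax continuous_on_softmax
        softmax_nonneg sum_softmax[OF p] order]) (rule softmax_close)
  moreover have "4 * \<delta> / m + 2 * hi * \<delta> = 2 * ((2 + 4 * L) * \<delta> / m)"
    using m by (simp add: hi_def field_simps)
  ultimately show ?thesis unfolding lo_def hi_def lo'_def hi'_def by linarith
qed

lemma TV_softargmin_shift_le:
  assumes p: "p \<ge> 1" and L: "softL eps p > 0" and m: "xmin p x > 0" "\<delta> \<le> xmin p x"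
    and shift: "\<And>i. i < p \<Longrightarrow> x i \<le> x' i \<and> x' i \<le> x i + \<delta>"
  shows "TV (softargmin eps p x) (softargmin eps p x') \<le> (2 + 4 * softL eps p) * \<delta> / xmin p x"
proof -
  have m': "xmin p x \<le> xmin p x'" "xmin p x' \<le> xmin p x + \<delta>"
    using xmin_shift_bounds[where x = x and x' = x' and \<delta> = \<delta>, OF p shift] by auto
  have pmf: "pmf (softargmin eps p y) i = (if i < p then interval_average (2 * softL eps p / xmin p y)
      (4 * softL eps p / xmin p y) (\<lambda>c. softmax p y c i) else 0)" if "y = x \<or> y = x'" for y i
    using that m m' by (intro pmf_softargmin p L) auto
  have "TV (softargmin eps p x) (softargmin eps p x')
      \<le> (\<Sum>i<p. \<bar>pmf (softargmin eps p x) i - pmf (softargmin eps p x') i\<bar>) / 2"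
    by (rule TV_le_half_sum_abs_diff) (simp_all add: pmf)
  also have "\<dots> \<le> 2 * ((2 + 4 * softL eps p) * \<delta> / xmin p x) / 2"
    using sum_abs_softmax_window_average_diff_le[where x = x and x' = x', OF p L m(1) m' _ shift] m m'
    by (intro divide_right_mono) (simp_all add: pmf)
  finally show ?thesis by simp
qed

theorem mainTheorem11:
  fixes p :: nat and x x' :: "nat \<Rightarrow> real" and eps \<delta> :: real
  assumes "p \<ge> 1"
    and "\<forall>i<p. x i \<ge> 0"
    and "0 < eps" and "eps \<le> 1"
    and "\<delta> > 0"
    and "\<delta> \<le> xmin p x / (4 * (1 / eps) * ln (2 * real p * (1 / eps)))"
    and "\<forall>i<p. 0 \<le> x' i \<and> x i \<le> x' i \<and> x' i \<le> x i + \<delta>"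
  shows "TV (softargmin eps p x) (softargmin eps p x')
           \<le> 10 * (1 / eps) * ln (2 * real p * (1 / eps)) * \<delta> / xmin p x"
proof -
  define L where "L = softL eps p"
  define m where "m = xmin p x"
  have L: "2 / 3 \<le> L" using softL_ge_two_thirds assms(1,3,4) by (simp add: L_def)
  have \<delta>: "\<delta> \<le> m / (4 * L)" using assms(6) by (simp add: m_def L_def softL_def mult.assoc)
  have "0 < m / (4 * L)" using \<delta> assms(5) by linarith
  then have "0 < m" using L by (simp add: zero_less_divide_iff)
  have "m / (4 * L) \<le> m / 1" using L \<open>0 < m\<close> by (intro divide_left_mono) auto
  then have "\<delta> \<le> m" using \<delta> by simp
  have "TV (softargmin eps p x) (softargmin eps p x') \<le> (2 + 4 * L) * \<delta> / m"
    using TV_softargmin_shift_le[of p eps x \<delta> x'] assms(1,7) L \<open>0 < m\<close> \<open>\<delta> \<le> m\<close>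
    by (simp add: L_def m_def)
  also have "\<dots> \<le> 10 * L * \<delta> / m"
    using L \<open>0 < m\<close> assms(5) by (intro divide_right_mono mult_right_mono) auto
  finally show ?thesis by (simp add: L_def m_def softL_def)
qed

end
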